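(* Let $d\geq1$ and let $\mathbb P$ be a shift-invariant probability measure on $\Omega$ with forbidden direction $-\hat u$, $\hat u\in\mathbb R^d\setminus\{0\}$, i.e. $\mathbb P\big(\sum_{z:\,z\cdot\hat u\geq0}\pi_{0z}=1\big)=1$. Assume (N): there is a deterministic $\delta>0$ with $\mathbb P\big(\sum_z z\cdot\hat u\,\pi_{0z}\geq\delta\big)=1$; and (M) with some $p>1$: there is a deterministic $M>0$ with $\mathbb P\big(\sum_z|z|^p\pi_{0z}\leq M^p\big)=1$. Then there exist strictly positive finite constants $\bar C_m(M,\delta,p)$ (for $m\geq0$), $\hat C_{\bar p}(M,\delta,p)$ (for $1\leq\bar p<p$) and $\lambda_0(M,\delta,p)$ such that for all $x\in\mathbb Z^d$, $\lambda\in[0,\lambda_0]$, integers $n,m\geq0$ and $\mathbb P$-a.e. $\omega$: (i) $E^\omega_x(|X_m-x|^{\bar p})\leq M^{\bar p}m^{\bar p}$ for $1\leq\bar p\leq p$; (ii) $E^\omega_x(e^{-\lambda X_n\cdot\hat u})\leq e^{-\lambda x\cdot\hat u}(1-\lambda\delta/2)^n$; (iii) $P^\omega_x(\sigma_1>n)\leq e^{\lambda}(1-\lambda\delta/2)^n$; (iv) $E^\omega_x(\sigma_1^m)\leq\bar C_m$; (v) $E^\omega_x(|X_{\sigma_1}-x|^{\bar p})\leq\hat C_{\bar p}$ for $1\leq\bar p<p$.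
   Context: $\Omega=\mathcal P^{\mathbb Z^d}$, $\mathcal P$ the probability vectors on $\mathbb Z^d$; $\omega_x=(\pi_{x,x+y}(\omega))_y$; shifts $\pi_{xy}(T_z\omega)=\pi_{x+z,y+z}(\omega)$, and shift-invariance means $\mathbb P\circ T_z^{-1}=\mathbb P$ for all $z$. $P^\omega_x$ is the law of the Markov chain $(X_n)$ with $X_0=x$ and transitions $\pi_{yz}(\omega)$, $E^\omega_x$ its expectation. $|\cdot|$ is the $\ell^1$ norm. $\sigma_1=\inf\{n: X_n\cdot\hat u\geq X_0\cdot\hat u+1\}$. *)

theory Defs
  imports "HOL-Analysis.Analysis" "HOL-Probability.Probability"
begin

text \<open>Sites are points of Z^d, rendered as int^'d (the dimension d = CARD('d) \<ge> 1).
  An environment omega is rendered by its transition probabilities: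
  omega x y = pi_{xy}(omega).\<close>

type_synonym 'd env = "int^'d \<Rightarrow> int^'d \<Rightarrow> real"

definition l1norm :: "int^('d::finite) \<Rightarrow> real" where
  "l1norm z = (\<Sum>i\<in>UNIV. real_of_int \<bar>z$i\<bar>)"

definition dotu :: "int^('d::finite) \<Rightarrow> real^'d \<Rightarrow> real" where
  "dotu z u = (\<Sum>i\<in>UNIV. real_of_int (z$i) * u$i)"

definition prob_vectors :: "(int^('d::finite) \<Rightarrow> real) set" where
  "prob_vectors = {q. (\<forall>y. 0 \<le> q y) \<and> (q has_sum 1) UNIV}"

definition Omega :: "('d::finite) env set" where
  "Omega = {\<omega>. \<forall>x. (\<lambda>y. \<omega> x (x + y)) \<in> prob_vectors}"

definition shift :: "int^('d::finite) \<Rightarrow> 'd env \<Rightarrow> 'd env" where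
  "shift z \<omega> = (\<lambda>x y. \<omega> (x + z) (y + z))"

definition env_space :: "('d::finite) env measure" where
  "env_space = PiM UNIV (\<lambda>_. PiM UNIV (\<lambda>_. borel))"

definition kernel :: "('d::finite) env \<Rightarrow> int^'d \<Rightarrow> (int^'d) pmf" where
  "kernel \<omega> x = embed_pmf (\<omega> x)"

text \<open>Law under P^omega_x of the path (X_0,...,X_n), as a list of length n+1
  (entry k is X_k).\<close>
fun path_pmf :: "('d::finite) env \<Rightarrow> int^'d \<Rightarrow> nat \<Rightarrow> (int^'d) list pmf" where
  "path_pmf \<omega> x 0 = return_pmf [x]"
| "path_pmf \<omega> x (Suc n) =
     bind_pmf (path_pmf \<omega> x n) (\<lambda>ys. map_pmf (\<lambda>y. ys @ [y]) (kernel \<omega> (last ys)))"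

definition hits :: "real^('d::finite) \<Rightarrow> (int^'d) list \<Rightarrow> nat \<Rightarrow> bool" where
  "hits u ys k \<longleftrightarrow> k < length ys \<and> dotu (ys!0) u + 1 \<le> dotu (ys!k) u"

text \<open>For a path (X_0..X_N): min(sigma_1, N)\<close>
definition sigma_trunc :: "real^('d::finite) \<Rightarrow> (int^'d) list \<Rightarrow> nat" where
  "sigma_trunc u ys = (if \<exists>k. hits u ys k then (LEAST k. hits u ys k) else length ys - 1)"

text \<open>E^omega_x (sigma_1^m) = sup_N E^omega_x (min(sigma_1,N)^m) (monotone convergence)\<close>
definition E_sigma_pow :: "('d::finite) env \<Rightarrow> real^'d \<Rightarrow> int^'d \<Rightarrow> nat \<Rightarrow> ennreal" where
  "E_sigma_pow \<omega> u x m =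
     (SUP N. \<integral>\<^sup>+ ys. ennreal (real (sigma_trunc u ys) ^ m) \<partial>measure_pmf (path_pmf \<omega> x N))"

text \<open>E^omega_x (|X_{sigma_1} - x|^pb ; sigma_1 < infinity)
   = sup_N E^omega_x (|X_{sigma_1} - x|^pb ; sigma_1 \<le> N)\<close>
definition E_hit_disp :: "('d::finite) env \<Rightarrow> real^'d \<Rightarrow> int^'d \<Rightarrow> real \<Rightarrow> ennreal" where
  "E_hit_disp \<omega> u x pb =
     (SUP N. \<integral>\<^sup>+ ys. (if \<exists>k. hits u ys k
                        then ennreal (l1norm (ys ! sigma_trunc u ys - x) powr pb) else 0)
             \<partial>measure_pmf (path_pmf \<omega> x N))"

end

(*
  The hypotheses are stated at the origin only; shift invariance and countability of Z^d
  make them hold almost surely at every site, so almost every environment \<omega> defines a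
  Markov chain whose steps never decrease X \<cdot> u, have drift at least \<delta> along u and
  p-th moment at most M^p.  All five bounds then follow for such a fixed \<omega>:

  (i) by induction on m, splitting |X_(m+1) - x|^pb by convexity with weights m and 1 and
  bounding the last step by Jensen's inequality;
  (ii) from exp (-t) \<le> 1 - t + t^q with q = min p 2, which gives, for a step \<xi>,
  E exp (-\<lambda> \<xi> \<cdot> u) \<le> 1 - \<lambda>\<delta> + C \<lambda>^q \<le> 1 - \<lambda>\<delta>/2 for small \<lambda>, iterated along the path;
  (iii) from (ii) by Chebyshev's inequality, since X_n \<cdot> u < x \<cdot> u + 1 on {\<sigma>_1 > n};
  (iv) and (v) by summing the geometric tail (iii) over the value of \<sigma>_1, where for (v)
  Young's inequality |X_(k+1) - x|^pb \<le> w^k + w^(k (1 - p/pb)) |X_(k+1) - x|^p with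
  w = \<rho>^(-1/2), where \<rho> = 1 - \<lambda>_0 \<delta>/2 is the decay rate of the tail, trades that tail
  against the p-th moment bound (i).
*)

theory Submission
  imports Defs
begin

section \<open>Elementary inequalities\<close>

lemma powr_le_tangent:
  fixes y c r :: real
  assumes "0 \<le> y" "0 < c" "0 < r" "r \<le> 1"
  shows "y powr r \<le> r * c powr (r - 1) * y + (1 - r) * c powr r"
proof (cases "y = 0")
  case True
  then show ?thesis using assms by simp
next
  case False
  then have "y powr r * c powr (1 - r) \<le> r * y + (1 - r) * c"
    using Youngs_inequality_0[of r "1 - r" y c] assms by simp
  moreover have "c powr (1 - r) * c powr (r - 1) = 1" "c * c powr (r - 1) = c powr r"
    using assms by (simp_all add: powr_add[symmetric] powr_mult_base)
  ultimately have "y powr r \<le> (r * y + (1 - r) * c) * c powr (r - 1)"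
    by (metis mult.assoc mult.right_neutral mult_right_mono powr_ge_zero)
  also have "\<dots> = r * c powr (r - 1) * y + (1 - r) * (c * c powr (r - 1))"
    by (simp add: algebra_simps)
  finally show ?thesis
    using \<open>c * c powr (r - 1) = c powr r\<close> by simp
qed

lemma powr_add_le_weighted:
  fixes a b s t pb :: real
  assumes "0 \<le> a" "0 \<le> b" "0 < s" "0 < t" "1 \<le> pb"
  shows "(a + b) powr pb \<le> (s + t) powr (pb - 1) * (s powr (1 - pb) * a powr pb + t powr (1 - pb) * b powr pb)"
proof -
  have scale: "c powr pb \<le> (s + t) powr (pb - 1) * (r powr (1 - pb) * c powr pb)"
    if "0 < r" "r \<le> s + t" for c r
  proof -
    have "1 \<le> ((s + t) / r) powr (pb - 1)"
      using that assms by (intro ge_one_powr_ge_zero) auto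
    also have "((s + t) / r) powr (pb - 1) = (s + t) powr (pb - 1) * r powr (1 - pb)"
      using that assms by (simp add: powr_divide powr_diff)
    finally have "1 \<le> (s + t) powr (pb - 1) * r powr (1 - pb)" .
    from mult_right_mono[OF this powr_ge_zero] show ?thesis
      by (simp add: mult.assoc)
  qed
  consider "a = 0" | "b = 0" | "0 < a" "0 < b"
    using assms by linarith
  then show ?thesis
  proof cases
    case 1
    then show ?thesis using scale[of t b] assms by simp
  next
    case 2
    then show ?thesis using scale[of s a] assms by simp
  next
    case 3
    define w where "w = t / (s + t)"
    have w: "0 \<le> w" "w \<le> 1" "1 - w = s / (s + t)"
      using assms by (auto simp: w_def field_simps)
    have "((1 - w) * (a / s) + w * (b / t)) powr pb \<le> (1 - w) * (a / s) powr pb + w * (b / t) powr pb"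
      using convex_onD[OF powr_convex[OF assms(5)] w(1,2), of "a / s" "b / t"] 3 assms by simp
    also have "(1 - w) * (a / s) + w * (b / t) = (a + b) / (s + t)"
      using assms by (simp only: w(3)) (simp add: w_def add_divide_distrib)
    also have "(1 - w) * (a / s) powr pb + w * (b / t) powr pb
        = (s powr (1 - pb) * a powr pb + t powr (1 - pb) * b powr pb) / (s + t)"
    proof -
      have "r / (s + t) * (c / r) powr pb = r powr (1 - pb) * c powr pb / (s + t)" if "0 < r" for r c
        using that by (simp add: powr_divide powr_diff)
      then show ?thesis
        using assms by (simp only: w(3)) (simp add: w_def add_divide_distrib)
    qed
    finally have "(a + b) powr pb / (s + t) powr pb
        \<le> (s powr (1 - pb) * a powr pb + t powr (1 - pb) * b powr pb) / (s + t)"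
      using assms by (simp add: powr_divide)
    then show ?thesis
      using assms by (simp add: powr_diff field_simps)
  qed
qed

lemma powr_le_add_powr:
  fixes a w pb p :: real
  assumes "0 \<le> a" "0 < w" "0 < pb" "pb < p"
  shows "a powr pb \<le> w + w powr (1 - p / pb) * a powr p"
proof (cases "a powr pb \<le> w")
  case True
  then show ?thesis by (simp add: add_increasing2)
next
  case False
  define e where "e = p / pb - 1"
  have e: "0 < e" "pb * e = p - pb" "1 - p / pb = - e"
    using assms by (auto simp: e_def field_simps)
  have "w powr e \<le> (a powr pb) powr e"
    using False assms e by (intro powr_mono2) auto
  then have "a powr pb * w powr e \<le> a powr pb * a powr (p - pb)"
    using mult_left_mono[of "w powr e" _ "a powr pb"] e by (simp add: powr_powr)
  also have "\<dots> = a powr p"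
    using powr_add[of a pb "p - pb"] by simp
  finally have "a powr pb \<le> a powr p / w powr e"
    using assms by (simp add: pos_le_divide_eq)
  also have "\<dots> = w powr (1 - p / pb) * a powr p"
    by (simp add: e(3) powr_minus_divide)
  finally show ?thesis
    using assms by linarith
qed

lemma powr_less_one_of_less_one:
  fixes r e :: real
  assumes "0 \<le> r" "r < 1" "0 < e"
  shows "r powr e < 1"
  using powr_less_mono2[OF assms(3,1,2)] by simp

lemma exp_minus_le_powr:
  fixes t q :: real
  assumes "0 \<le> t" "1 < q" "q \<le> 2"
  shows "exp (- t) \<le> 1 - t + t powr q"
proof (cases "t \<le> 1")
  case True
  have "exp (- t) \<le> 1 / (1 + t)"
    using exp_ge_add_one_self[of t] assms by (simp add: exp_minus divide_simps)
  also have "\<dots> \<le> 1 - t + t ^ 2"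
    using assms by (simp add: divide_simps algebra_simps power2_eq_square)
  also have "t ^ 2 \<le> t powr q"
  proof -
    have "t powr 2 \<le> t powr q"
      using True assms by (intro powr_mono') auto
    then show ?thesis
      using assms by simp
  qed
  finally show ?thesis by simp
next
  case False
  then have "t \<le> t powr q"
    using assms powr_mono[of 1 q t] by simp
  moreover have "exp (- t) \<le> 1"
    using assms by simp
  ultimately show ?thesis by linarith
qed

lemma powr_le_one_plus_powr:
  fixes l q p :: real
  assumes "0 \<le> l" "0 < q" "q \<le> p"
  shows "l powr q \<le> 1 + l powr p"
proof (cases "l \<le> 1")
  case True
  then have "l powr q \<le> 1"
    using assms powr_mono2[of q l 1] by simp
  then show ?thesis
    using powr_ge_zero[of l p] by linarith
next
  case False
  then have "l powr q \<le> l powr p"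
    using assms by (intro powr_mono) auto
  then show ?thesis by simp
qed

lemma exp_minus_mult_add_le:
  fixes lam s b l p :: real
  assumes "0 \<le> lam" "0 \<le> s" "s \<le> b * l" "0 \<le> b" "0 \<le> l" "1 < p"
  shows "exp (- (lam * s)) + lam * s \<le> 1 + lam powr min p 2 * b powr min p 2 * (1 + l powr p)"
proof -
  let ?q = "min p 2"
  have "s powr ?q \<le> (b * l) powr ?q"
    using assms by (intro powr_mono2) auto
  also have "\<dots> \<le> b powr ?q * (1 + l powr p)"
    using assms powr_le_one_plus_powr[of l ?q p] by (simp add: powr_mult mult_left_mono)
  finally have "(lam * s) powr ?q \<le> lam powr ?q * (b powr ?q * (1 + l powr p))"
    using assms by (simp add: powr_mult mult_left_mono)
  moreover have "exp (- (lam * s)) \<le> 1 - lam * s + (lam * s) powr ?q"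
    using assms by (intro exp_minus_le_powr) auto
  ultimately show ?thesis
    by (simp add: mult.assoc)
qed

lemma power_div_fact_le_exp:
  fixes x :: real
  assumes "0 \<le> x"
  shows "x ^ n / fact n \<le> exp x"
  using assms sum_le_suminf[OF summable_exp_generic[of x], of "{n}"]
  by (simp add: exp_def divide_inverse ac_simps)

lemma summable_pow_mult_geometric:
  fixes s :: real
  assumes "0 < s" "s < 1"
  shows "summable (\<lambda>k. real k ^ n * s ^ k)"
proof -
  define a where "a = (1 + s) / 2"
  define c where "c = ln (a / s)"
  have a: "s < a" "a < 1"
    using assms by (auto simp: a_def)
  have c: "0 < c" "exp c * s = a"
    using a assms by (simp_all add: c_def)
  define C where "C = fact n / c ^ n"
  have "real k ^ n \<le> C * exp (c * k)" for k
  proof -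
    have "c ^ n * real k ^ n \<le> exp (c * k) * fact n"
      using power_div_fact_le_exp[of "c * k" n] c
      by (simp add: pos_divide_le_eq power_mult_distrib)
    then show ?thesis
      using c by (simp add: C_def pos_le_divide_eq ac_simps)
  qed
  then have bound: "norm (real k ^ n * s ^ k) \<le> C * a ^ k" for k
  proof -
    have "norm (real k ^ n * s ^ k) \<le> C * (exp (c * k) * s ^ k)"
      using mult_right_mono[OF \<open>real k ^ n \<le> C * exp (c * k)\<close>, of "s ^ k"] assms
      by (simp add: mult.assoc)
    also have "exp (c * k) * s ^ k = a ^ k"
      using c by (metis exp_of_nat2_mult power_mult_distrib)
    finally show ?thesis .
  qed
  have "summable (\<lambda>k. C * a ^ k)"
    using a assms by (intro summable_mult summable_geometric) simp
  then show ?thesis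
    using bound by (rule summable_comparison_test')
qed

definition poly_geometric_sum :: "nat \<Rightarrow> real \<Rightarrow> real" where
  "poly_geometric_sum n s = (\<Sum>k. real (Suc k) ^ n * s ^ k)"

lemma summable_Suc_pow_mult_geometric:
  fixes s :: real
  assumes "0 < s" "s < 1"
  shows "summable (\<lambda>k. real (Suc k) ^ n * s ^ k)"
proof -
  have "summable (\<lambda>k. real (Suc k) ^ n * s ^ Suc k)"
    using summable_pow_mult_geometric[OF assms, of n]
    by (simp only: summable_Suc_iff[of "\<lambda>k. real k ^ n * s ^ k"])
  also have "(\<lambda>k. real (Suc k) ^ n * s ^ Suc k) = (\<lambda>k. s * (real (Suc k) ^ n * s ^ k))"
    by (simp add: fun_eq_iff)
  finally show ?thesis
    using assms by simp
qed

lemma sum_le_poly_geometric_sum: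
  fixes s :: real
  assumes "0 < s" "s < 1"
  shows "(\<Sum>k<N. real (Suc k) ^ n * s ^ k) \<le> poly_geometric_sum n s"
  unfolding poly_geometric_sum_def
  using assms by (intro sum_le_suminf summable_Suc_pow_mult_geometric) auto

lemma poly_geometric_sum_nonneg: "0 < s \<Longrightarrow> s < 1 \<Longrightarrow> 0 \<le> poly_geometric_sum n s"
  unfolding poly_geometric_sum_def
  by (intro suminf_nonneg summable_Suc_pow_mult_geometric) auto

lemma sum_geometric_terms_le:
  fixes r s c C :: real
  assumes "0 < r" "r < 1" "0 < s" "s < 1" "0 \<le> c" "0 \<le> C"
  shows "(\<Sum>k<N. ennreal (c * r ^ k) + ennreal (s ^ k) * ennreal (C * real (Suc k) ^ n))
    \<le> ennreal (c / (1 - r) + C * poly_geometric_sum n s)"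
proof -
  have "(\<Sum>k<N. ennreal (c * r ^ k) + ennreal (s ^ k) * ennreal (C * real (Suc k) ^ n))
      = (\<Sum>k<N. ennreal (c * r ^ k + C * (real (Suc k) ^ n * s ^ k)))"
    using assms by (intro sum.cong refl) (simp add: ennreal_plus ennreal_mult' ac_simps)
  also have "\<dots> = ennreal (\<Sum>k<N. c * r ^ k + C * (real (Suc k) ^ n * s ^ k))"
    using assms by (intro sum_ennreal) auto
  also have "\<dots> = ennreal (c * (\<Sum>k<N. r ^ k) + C * (\<Sum>k<N. real (Suc k) ^ n * s ^ k))"
    by (simp add: sum.distrib sum_distrib_left)
  also have "\<dots> \<le> ennreal (c / (1 - r) + C * poly_geometric_sum n s)"
  proof (intro ennreal_leI add_mono mult_left_mono)
    have "(\<Sum>k<N. r ^ k) \<le> (\<Sum>k. r ^ k)"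
      using assms by (intro sum_le_suminf) auto
    then have "(\<Sum>k<N. r ^ k) \<le> 1 / (1 - r)"
      using assms by (simp add: suminf_geometric)
    from mult_left_mono[OF this assms(5)] show "c * (\<Sum>k<N. r ^ k) \<le> c / (1 - r)"
      by simp
  qed (use assms sum_le_poly_geometric_sum[of s] in auto)
  finally show ?thesis .
qed

lemma nn_integral_count_space_eq_infsum:
  fixes f :: "'a \<Rightarrow> real"
  assumes "\<And>x. x \<in> A \<Longrightarrow> 0 \<le> f x" "f summable_on A"
  shows "(\<integral>\<^sup>+ x. ennreal (f x) \<partial>count_space A) = ennreal (infsum f A)"
proof -
  have "Infinite_Set_Sum.abs_summable_on f A"
    using assms summable_on_iff_abs_summable_on_real abs_summable_equivalent by blast
  then show ?thesis
    using nn_integral_conv_infsetsum[of f A] infsetsum_infsum[of f A] assms(1) by simp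
qed

lemma has_sum_one_eq_zero_outside:
  fixes g :: "'a \<Rightarrow> real"
  assumes "\<And>z. 0 \<le> g z" "(g has_sum 1) UNIV" "infsum g A = 1" "z \<notin> A"
  shows "g z = 0"
proof -
  have "g summable_on A" "g summable_on - A"
    using assms(2) by (auto intro: summable_on_subset_banach has_sum_imp_summable)
  then have "infsum g A + infsum g (- A) = 1"
    using assms(2) infsum_Un_disjoint[of g A "- A"] by (simp add: infsumI)
  then have "infsum g (- A) = 0"
    using assms(3) by simp
  moreover have "infsum g {z} \<le> infsum g (- A)"
    using assms \<open>g summable_on - A\<close> by (intro infsum_mono_neutral) auto
  ultimately show ?thesis
    using assms(1)[of z] by simp
qed

lemma nn_integral_count_space_translate:
  fixes f :: "'a::ab_group_add \<Rightarrow> ennreal"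
  shows "(\<integral>\<^sup>+ y. f y \<partial>count_space UNIV) = (\<integral>\<^sup>+ z. f (x + z) \<partial>count_space UNIV)"
proof -
  have "bij_betw ((+) x) UNIV UNIV"
    by (rule bij_betwI[where g = "\<lambda>y. y - x"]) auto
  then show ?thesis
    using nn_integral_bij_count_space[of "(+) x" UNIV UNIV f] by simp
qed

lemma nn_integral_pmf_affine:
  assumes "0 \<le> a" "0 \<le> b" "\<And>y. 0 \<le> f y"
  shows "(\<integral>\<^sup>+ y. ennreal (a * f y + b) \<partial>measure_pmf q) = ennreal a * (\<integral>\<^sup>+ y. ennreal (f y) \<partial>measure_pmf q) + ennreal b"
proof -
  have "(\<integral>\<^sup>+ y. ennreal (a * f y + b) \<partial>measure_pmf q) = (\<integral>\<^sup>+ y. ennreal a * ennreal (f y) + ennreal b \<partial>measure_pmf q)"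
    using assms by (simp add: ennreal_mult ennreal_plus)
  also have "\<dots> = ennreal a * (\<integral>\<^sup>+ y. ennreal (f y) \<partial>measure_pmf q) + ennreal b"
    by (simp add: nn_integral_add nn_integral_cmult measure_pmf.emeasure_space_1)
  finally show ?thesis .
qed

lemma ennreal_le_diff_of_add_le:
  "E + ennreal a \<le> ennreal b \<Longrightarrow> 0 \<le> a \<Longrightarrow> E \<le> ennreal (b - a)"
  by (simp add: ennreal_le_minus_iff flip: ennreal_minus)

section \<open>Lattice vectors, paths and the first hitting time\<close>

lemma dotu_diff: "dotu (a - b) u = dotu a u - dotu b u"
  by (simp add: dotu_def left_diff_distrib sum_subtractf)

lemma dotu_le_norm_l1norm: "dotu z u \<le> norm u * l1norm z"
proof -
  have "dotu z u \<le> (\<Sum>i\<in>UNIV. real_of_int \<bar>z $ i\<bar> * norm u)"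
    unfolding dotu_def
  proof (rule sum_mono)
    fix i
    have "real_of_int (z $ i) * u $ i \<le> real_of_int \<bar>z $ i\<bar> * \<bar>u $ i\<bar>"
      by (metis abs_ge_self abs_mult of_int_abs)
    also have "\<dots> \<le> real_of_int \<bar>z $ i\<bar> * norm u"
      by (intro mult_left_mono component_le_norm_cart) simp
    finally show "real_of_int (z $ i) * u $ i \<le> real_of_int \<bar>z $ i\<bar> * norm u" .
  qed
  also have "\<dots> = norm u * l1norm z"
    by (simp add: l1norm_def sum_distrib_left mult.commute)
  finally show ?thesis .
qed

lemma l1norm_nonneg: "0 \<le> l1norm z"
  by (simp add: l1norm_def sum_nonneg)

lemma l1norm_zero [simp]: "l1norm 0 = 0"
  by (simp add: l1norm_def)

lemma l1norm_triangle: "l1norm (a + b) \<le> l1norm a + l1norm b"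
  unfolding l1norm_def sum.distrib[symmetric] by (intro sum_mono) simp

lemma set_pmf_path_pmf:
  "ys \<in> set_pmf (path_pmf \<omega> x n) \<Longrightarrow> length ys = Suc n \<and> ys ! 0 = x"
proof (induction n arbitrary: ys)
  case 0
  then show ?case by simp
next
  case (Suc n)
  then obtain zs y where "zs \<in> set_pmf (path_pmf \<omega> x n)" "ys = zs @ [y]"
    by auto
  with Suc.IH[of zs] show ?case
    by (auto simp: nth_append)
qed

lemma map_take_path_pmf:
  "k \<le> N \<Longrightarrow> map_pmf (take (Suc k)) (path_pmf \<omega> x N) = path_pmf \<omega> x k"
proof (induction N)
  case 0
  then show ?case by simp
next
  case (Suc N)
  show ?case
  proof (cases "k = Suc N")
    case True
    have "map_pmf (take (Suc k)) (path_pmf \<omega> x (Suc N)) = map_pmf id (path_pmf \<omega> x (Suc N))"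
      by (rule map_pmf_cong) (auto simp: True dest!: set_pmf_path_pmf)
    then show ?thesis
      by (simp add: True pmf.map_id)
  next
    case False
    then have "k \<le> N"
      using Suc.prems by simp
    have "map_pmf (take (Suc k)) (path_pmf \<omega> x (Suc N)) =
        bind_pmf (path_pmf \<omega> x N) (\<lambda>ys. map_pmf (\<lambda>y. take (Suc k) (ys @ [y])) (kernel \<omega> (last ys)))"
      by (simp add: map_bind_pmf pmf.map_comp o_def)
    also have "\<dots> = bind_pmf (path_pmf \<omega> x N) (\<lambda>ys. return_pmf (take (Suc k) ys))"
      using \<open>k \<le> N\<close> by (intro bind_pmf_cong refl) (auto dest!: set_pmf_path_pmf)
    also have "\<dots> = path_pmf \<omega> x k"
      using Suc.IH \<open>k \<le> N\<close> by (simp add: map_pmf_def)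
    finally show ?thesis .
  qed
qed

lemma nn_integral_path_pmf_take:
  "k \<le> N \<Longrightarrow> (\<integral>\<^sup>+ ys. f (take (Suc k) ys) \<partial>path_pmf \<omega> x N) = (\<integral>\<^sup>+ ys. f ys \<partial>path_pmf \<omega> x k)"
  by (simp flip: map_take_path_pmf[of k N \<omega> x])

lemma nn_integral_path_pmf_Suc:
  "(\<integral>\<^sup>+ ys. f (ys ! Suc n) \<partial>path_pmf \<omega> x (Suc n)) =
   (\<integral>\<^sup>+ ys. (\<integral>\<^sup>+ y. f y \<partial>kernel \<omega> (ys ! n)) \<partial>path_pmf \<omega> x n)"
proof -
  have "(\<integral>\<^sup>+ ys. f (ys ! Suc n) \<partial>path_pmf \<omega> x (Suc n)) =
      (\<integral>\<^sup>+ ys. (\<integral>\<^sup>+ y. f ((ys @ [y]) ! Suc n) \<partial>kernel \<omega> (last ys)) \<partial>path_pmf \<omega> x n)"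
    by simp
  also have "\<dots> = (\<integral>\<^sup>+ ys. (\<integral>\<^sup>+ y. f y \<partial>kernel \<omega> (ys ! n)) \<partial>path_pmf \<omega> x n)"
  proof (intro nn_integral_cong_AE AE_pmfI)
    fix ys
    assume "ys \<in> set_pmf (path_pmf \<omega> x n)"
    then have "length ys = Suc n"
      by (simp add: set_pmf_path_pmf)
    moreover from this have "last ys = ys ! n"
      by (metis diff_Suc_1 last_conv_nth list.size(3) nat.distinct(1))
    ultimately show "(\<integral>\<^sup>+ y. f ((ys @ [y]) ! Suc n) \<partial>kernel \<omega> (last ys)) = (\<integral>\<^sup>+ y. f y \<partial>kernel \<omega> (ys ! n))"
      by (simp add: nth_append)
  qed
  finally show ?thesis .
qed

lemma not_hits_0: "\<not> hits u ys 0"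
  by (simp add: hits_def)

lemma
  assumes "length ys = Suc N"
  shows sigma_trunc_le: "sigma_trunc u ys \<le> N"
    and not_hits_before_sigma_trunc: "i < sigma_trunc u ys \<Longrightarrow> \<not> hits u ys i"
    and hits_sigma_trunc: "\<exists>k. hits u ys k \<Longrightarrow> hits u ys (sigma_trunc u ys)"
proof -
  show "hits u ys (sigma_trunc u ys)" if "\<exists>k. hits u ys k"
    using LeastI_ex[OF that] that by (simp add: sigma_trunc_def)
  then show "sigma_trunc u ys \<le> N"
    using assms by (cases "\<exists>k. hits u ys k") (auto simp: sigma_trunc_def hits_def)
  show "\<not> hits u ys i" if "i < sigma_trunc u ys"
    using that not_less_Least by (auto simp: sigma_trunc_def split: if_splits)
qed

definition no_hit_by :: "real^('d::finite) \<Rightarrow> nat \<Rightarrow> (int^'d) list set" where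
  "no_hit_by u k = {ys. \<forall>i\<le>k. \<not> hits u ys i}"

lemma emeasure_path_pmf_no_hit_by:
  assumes "k \<le> N"
  shows "emeasure (path_pmf \<omega> x N) (no_hit_by u k) = emeasure (path_pmf \<omega> x k) (no_hit_by u k)"
proof -
  have "emeasure (path_pmf \<omega> x N) (no_hit_by u k) = (\<integral>\<^sup>+ ys. indicator (no_hit_by u k) ys \<partial>path_pmf \<omega> x N)"
    by simp
  also have "\<dots> = (\<integral>\<^sup>+ ys. indicator (no_hit_by u k) (take (Suc k) ys) \<partial>path_pmf \<omega> x N)"
    using assms
    by (intro nn_integral_cong_AE AE_pmfI)
      (auto split: split_indicator simp: no_hit_by_def hits_def dest!: set_pmf_path_pmf)
  also have "\<dots> = emeasure (path_pmf \<omega> x k) (no_hit_by u k)"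
    using assms by (simp add: nn_integral_path_pmf_take)
  finally show ?thesis .
qed

lemma sigma_trunc_eq_Suc:
  assumes "length ys = Suc N" "sigma_trunc u ys = Suc k"
  shows "k < N" "ys \<in> no_hit_by u k"
  using sigma_trunc_le[OF assms(1), of u] not_hits_before_sigma_trunc[OF assms(1), of _ u] assms(2)
  by (auto simp: no_hit_by_def)

lemma sigma_trunc_pow_le_sum:
  assumes "length ys = Suc N"
  shows "ennreal (real (sigma_trunc u ys) ^ m)
    \<le> 1 + (\<Sum>k<N. ennreal (real (Suc k) ^ m) * indicator (no_hit_by u k) ys)"
proof (cases "sigma_trunc u ys")
  case 0
  then show ?thesis
    by (cases m) (simp_all add: add_increasing2)
next
  case (Suc k)
  with sigma_trunc_eq_Suc[OF assms] have "k < N" "ys \<in> no_hit_by u k"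
    by auto
  then have "ennreal (real (Suc k) ^ m) * indicator (no_hit_by u k) ys
      \<le> (\<Sum>k<N. ennreal (real (Suc k) ^ m) * indicator (no_hit_by u k) ys)"
    by (intro member_le_sum) auto
  then show ?thesis
    using Suc \<open>ys \<in> no_hit_by u k\<close> by (simp add: add_increasing)
qed

lemma hit_disp_le_sum:
  assumes "length ys = Suc N" "0 < w" "0 < pb" "pb < p"
  shows "(if \<exists>k. hits u ys k then ennreal (l1norm (ys ! sigma_trunc u ys - x) powr pb) else 0)
    \<le> (\<Sum>k<N. ennreal (w ^ k) * indicator (no_hit_by u k) ys
              + ennreal ((w powr (1 - p / pb)) ^ k * l1norm (ys ! Suc k - x) powr p))"
proof (cases "\<exists>k. hits u ys k")
  case True
  obtain k where k: "sigma_trunc u ys = Suc k"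
    using hits_sigma_trunc[OF assms(1) True] not_hits_0 by (metis not0_implies_Suc)
  with sigma_trunc_eq_Suc[OF assms(1)] have "k < N" "ys \<in> no_hit_by u k"
    by auto
  have "l1norm (ys ! Suc k - x) powr pb
      \<le> w ^ k + (w ^ k) powr (1 - p / pb) * l1norm (ys ! Suc k - x) powr p"
    using assms l1norm_nonneg by (intro powr_le_add_powr) auto
  also have "(w ^ k) powr (1 - p / pb) = (w powr (1 - p / pb)) ^ k"
    using assms(2) by (simp add: powr_realpow[symmetric] powr_powr powr_power mult.commute)
  finally have "ennreal (l1norm (ys ! Suc k - x) powr pb)
      \<le> ennreal (w ^ k) * indicator (no_hit_by u k) ys
        + ennreal ((w powr (1 - p / pb)) ^ k * l1norm (ys ! Suc k - x) powr p)"
    using assms(2) \<open>ys \<in> no_hit_by u k\<close> by (simp add: ennreal_leI flip: ennreal_plus)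
  also have "\<dots> \<le> (\<Sum>k<N. ennreal (w ^ k) * indicator (no_hit_by u k) ys
              + ennreal ((w powr (1 - p / pb)) ^ k * l1norm (ys ! Suc k - x) powr p))"
    using \<open>k < N\<close> by (intro member_le_sum[of k "{..<N}"]) auto
  finally show ?thesis
    using True k by simp
qed simp

(* For a step \<xi> and q = min p 2, E (\<lambda> \<xi> \<cdot> u)^q \<le> \<lambda>^q * exp_step_const u M p,
   by z \<cdot> u \<le> |u| |z|_1 and t^q \<le> 1 + t^p.  lambda0 is the largest \<lambda> \<le> 1/\<delta> for which this
   correction to E exp (- \<lambda> \<xi> \<cdot> u) \<le> 1 - \<lambda> E \<xi> \<cdot> u + \<dots> is absorbed by half the drift. *)

definition exp_step_const :: "real^('d::finite) \<Rightarrow> real \<Rightarrow> real \<Rightarrow> real" where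
  "exp_step_const u M p = norm u powr min p 2 * (1 + M powr p)"

definition lambda0 :: "real^('d::finite) \<Rightarrow> real \<Rightarrow> real \<Rightarrow> real \<Rightarrow> real" where
  "lambda0 u \<delta> M p = min (1 / \<delta>) ((\<delta> / (2 * exp_step_const u M p)) powr (1 / (min p 2 - 1)))"

lemma lambda0_pos: "u \<noteq> 0 \<Longrightarrow> 0 < \<delta> \<Longrightarrow> 0 < lambda0 u \<delta> M p"
  using add_pos_nonneg[OF zero_less_one powr_ge_zero[of M p]]
  by (simp add: lambda0_def exp_step_const_def)

lemma lambda0_mult_le: "0 < \<delta> \<Longrightarrow> lambda0 u \<delta> M p * \<delta> \<le> 1"
  using pos_le_divide_eq[of \<delta> "lambda0 u \<delta> M p" 1] by (simp add: lambda0_def)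

lemma powr_exp_step_const_le:
  assumes "u \<noteq> 0" "0 < \<delta>" "1 < p" "0 \<le> lam" "lam \<le> lambda0 u \<delta> M p"
  shows "lam powr min p 2 * exp_step_const u M p \<le> lam * \<delta> / 2"
proof -
  define q where "q = min p 2"
  define K where "K = exp_step_const u M p"
  have q: "1 < q" and K: "0 < K"
    using assms by (auto simp: q_def K_def exp_step_const_def add_pos_nonneg)
  have "lam powr (q - 1) \<le> ((\<delta> / (2 * K)) powr (1 / (q - 1))) powr (q - 1)"
    using assms q by (intro powr_mono2) (auto simp: lambda0_def q_def K_def)
  also have "\<dots> = \<delta> / (2 * K)"
    using q K assms by (simp add: powr_powr)
  finally have "lam powr (q - 1) * K \<le> \<delta> / 2"
    using K by (simp add: field_simps)
  then have "lam * (lam powr (q - 1) * K) \<le> lam * \<delta> / 2"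
    using mult_left_mono assms(4) by fastforce
  moreover have "lam powr q = lam * lam powr (q - 1)"
    using powr_add[of lam 1 "q - 1"] assms by simp
  ultimately show ?thesis
    by (simp add: q_def K_def mult.assoc)
qed

definition sigma_moment_const :: "real \<Rightarrow> real \<Rightarrow> nat \<Rightarrow> real" where
  "sigma_moment_const lam \<rho> m = 1 + exp lam * poly_geometric_sum m \<rho>"

definition hit_disp_const :: "real \<Rightarrow> real \<Rightarrow> real \<Rightarrow> real \<Rightarrow> real \<Rightarrow> real" where
  "hit_disp_const lam \<rho> M p pb =
     exp lam / (1 - sqrt \<rho>) + M powr p * poly_geometric_sum (nat \<lceil>p\<rceil>) (sqrt \<rho> powr (p / pb - 1))"

lemma sigma_moment_const_pos: "0 < \<rho> \<Longrightarrow> \<rho> < 1 \<Longrightarrow> 0 < sigma_moment_const lam \<rho> m"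
  using poly_geometric_sum_nonneg[of \<rho> m] by (simp add: sigma_moment_const_def add_pos_nonneg)

lemma hit_disp_const_pos:
  assumes "0 < \<rho>" "\<rho> < 1" "0 < pb" "pb < p"
  shows "0 < hit_disp_const lam \<rho> M p pb"
proof -
  have "sqrt \<rho> powr (p / pb - 1) < 1"
    using assms by (intro powr_less_one_of_less_one) (auto simp: field_simps)
  then show ?thesis
    using assms poly_geometric_sum_nonneg[of "sqrt \<rho> powr (p / pb - 1)"]
    by (simp add: hit_disp_const_def add_pos_nonneg)
qed

section \<open>One-step estimates\<close>

(* The hypotheses of the theorem, imposed at every site x rather than at the origin:
   \<omega> x (x + z) is the probability of the step z from x. *)
locale non_nestling_env =
  fixes \<omega> :: "('d::finite) env" and u :: "real^'d" and \<delta> M p :: real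
  assumes drift_pos: "0 < \<delta>" and M_pos: "0 < M" and p_gt_1: "1 < p"
    and env_Omega: "\<omega> \<in> Omega"
    and forbidden_direction: "\<And>x. (\<Sum>\<^sub>\<infinity>z\<in>{z. 0 \<le> dotu z u}. \<omega> x (x + z)) = 1"
    and drift: "\<And>x. \<delta> \<le> (\<Sum>\<^sub>\<infinity>z. dotu z u * \<omega> x (x + z))"
    and moment: "\<And>x. (\<integral>\<^sup>+ z. ennreal (l1norm z powr p * \<omega> x (x + z)) \<partial>count_space UNIV)
                      \<le> ennreal (M powr p)"
begin

lemma step_nonneg: "0 \<le> \<omega> x y"
proof -
  have "0 \<le> \<omega> x (x + (y - x))"
    using env_Omega unfolding Omega_def prob_vectors_def by blast
  then show ?thesis by simp
qed

lemma step_has_sum: "((\<lambda>z. \<omega> x (x + z)) has_sum 1) UNIV"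
  using env_Omega by (simp add: Omega_def prob_vectors_def)

lemma pmf_kernel: "pmf (kernel \<omega> x) y = \<omega> x y"
proof -
  have "(\<integral>\<^sup>+ y. ennreal (\<omega> x y) \<partial>count_space UNIV) = (\<integral>\<^sup>+ z. ennreal (\<omega> x (x + z)) \<partial>count_space UNIV)"
    by (rule nn_integral_count_space_translate)
  also have "\<dots> = ennreal (\<Sum>\<^sub>\<infinity>z. \<omega> x (x + z))"
    using step_has_sum[of x] step_nonneg
    by (intro nn_integral_count_space_eq_infsum) (auto dest: has_sum_imp_summable)
  also have "\<dots> = 1"
    using step_has_sum[of x] by (simp add: infsumI)
  finally show ?thesis
    unfolding kernel_def using step_nonneg by (subst pmf_embed_pmf) auto
qed

lemma nn_integral_kernel:
  "(\<integral>\<^sup>+ y. f y \<partial>kernel \<omega> x) = (\<integral>\<^sup>+ z. ennreal (\<omega> x (x + z)) * f (x + z) \<partial>count_space UNIV)"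
  unfolding nn_integral_measure_pmf pmf_kernel by (rule nn_integral_count_space_translate)

lemma backward_step_eq_0: "dotu z u < 0 \<Longrightarrow> \<omega> x (x + z) = 0"
  using has_sum_one_eq_zero_outside[of "\<lambda>z. \<omega> x (x + z)", OF step_nonneg step_has_sum forbidden_direction]
  by simp

lemma AE_kernel_forward: "AE y in kernel \<omega> x. 0 \<le> dotu (y - x) u"
proof (rule AE_pmfI)
  fix y
  assume "y \<in> set_pmf (kernel \<omega> x)"
  then have "\<omega> x (x + (y - x)) \<noteq> 0"
    by (simp add: set_pmf_iff pmf_kernel)
  then show "0 \<le> dotu (y - x) u"
    using backward_step_eq_0[of "y - x" x] by linarith
qed

lemma u_nonzero: "u \<noteq> 0"
proof
  assume "u = 0"
  then have "(\<Sum>\<^sub>\<infinity>z. dotu z u * \<omega> 0 (0 + z)) = 0"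
    by (simp add: dotu_def)
  with drift[of 0] drift_pos show False
    by simp
qed

lemma kernel_drift: "ennreal \<delta> \<le> (\<integral>\<^sup>+ y. ennreal (dotu (y - x) u) \<partial>kernel \<omega> x)"
proof -
  define h where "h = (\<lambda>z. dotu z u * \<omega> x (x + z))"
  have h_nonneg: "0 \<le> h z" for z
    using backward_step_eq_0[of z x] step_nonneg[of x "x + z"]
    by (cases "dotu z u < 0") (auto simp: h_def)
  have "h summable_on UNIV"
  proof (rule ccontr)
    assume "\<not> h summable_on UNIV"
    then have "infsum h UNIV = 0"
      by (rule infsum_not_exists)
    with drift[of x] drift_pos show False
      by (simp add: h_def)
  qed
  have "(\<integral>\<^sup>+ y. ennreal (dotu (y - x) u) \<partial>kernel \<omega> x) = (\<integral>\<^sup>+ z. ennreal (h z) \<partial>count_space UNIV)"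
    unfolding nn_integral_kernel
  proof (intro nn_integral_cong)
    fix z
    show "ennreal (\<omega> x (x + z)) * ennreal (dotu (x + z - x) u) = ennreal (h z)"
      using backward_step_eq_0[of z x] step_nonneg[of x "x + z"]
      by (cases "dotu z u < 0") (simp_all add: h_def ennreal_mult ac_simps)
  qed
  also have "\<dots> = ennreal (infsum h UNIV)"
    using h_nonneg \<open>h summable_on UNIV\<close> by (simp add: nn_integral_count_space_eq_infsum)
  finally show ?thesis
    using drift[of x] by (simp add: h_def ennreal_leI)
qed

lemma kernel_moment:
  "(\<integral>\<^sup>+ y. ennreal (l1norm (y - x) powr p) \<partial>kernel \<omega> x) \<le> ennreal (M powr p)"
proof -
  have "ennreal (\<omega> x (x + z)) * ennreal (l1norm (x + z - x) powr p) = ennreal (l1norm z powr p * \<omega> x (x + z))"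
    for z
    using step_nonneg[of x "x + z"] by (simp add: ennreal_mult ac_simps)
  then show ?thesis
    using moment[of x] by (simp add: nn_integral_kernel)
qed

lemma kernel_moment_powr:
  assumes "0 < pb" "pb \<le> p"
  shows "(\<integral>\<^sup>+ y. ennreal (l1norm (y - x) powr pb) \<partial>kernel \<omega> x) \<le> ennreal (M powr pb)"
proof -
  define r where "r = pb / p"
  define c where "c = M powr p"
  define A where "A = r * c powr (r - 1)"
  define B where "B = (1 - r) * c powr r"
  have r: "0 < r" "r \<le> 1" and c: "0 < c"
    using assms p_gt_1 M_pos by (auto simp: r_def c_def)
  then have AB: "0 \<le> A" "0 \<le> B"
    by (auto simp: A_def B_def)
  \<comment> \<open>Jensen's inequality for the concave map \<open>t \<mapsto> t powr r\<close>, via its tangent at \<open>t = M powr p\<close>\<close>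
  have "l1norm (y - x) powr pb \<le> A * l1norm (y - x) powr p + B" for y
  proof -
    have "l1norm (y - x) powr pb = (l1norm (y - x) powr p) powr r"
      using p_gt_1 by (simp add: powr_powr r_def)
    also have "\<dots> \<le> A * l1norm (y - x) powr p + B"
      unfolding A_def B_def using r c by (intro powr_le_tangent) auto
    finally show ?thesis .
  qed
  then have "(\<integral>\<^sup>+ y. ennreal (l1norm (y - x) powr pb) \<partial>kernel \<omega> x)
      \<le> (\<integral>\<^sup>+ y. ennreal (A * l1norm (y - x) powr p + B) \<partial>kernel \<omega> x)"
    by (intro nn_integral_mono ennreal_leI)
  also have "\<dots> = ennreal A * (\<integral>\<^sup>+ y. ennreal (l1norm (y - x) powr p) \<partial>kernel \<omega> x) + ennreal B"
    using AB by (intro nn_integral_pmf_affine) auto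
  also have "\<dots> \<le> ennreal A * ennreal c + ennreal B"
    using kernel_moment[of x] by (simp add: c_def mult_left_mono)
  also have "\<dots> = ennreal (r * (c * c powr (r - 1)) + (1 - r) * c powr r)"
    using AB c by (simp add: A_def B_def ac_simps flip: ennreal_mult ennreal_plus)
  also have "r * (c * c powr (r - 1)) + (1 - r) * c powr r = c powr r"
    using c by (simp add: powr_mult_base algebra_simps)
  also have "\<dots> = M powr pb"
    using p_gt_1 by (simp add: c_def r_def powr_powr)
  finally show ?thesis .
qed

lemma kernel_moment_powr_split:
  assumes "1 \<le> pb" "pb \<le> p" "0 < s"
  defines "K \<equiv> (s + 1) powr (pb - 1)"
  shows "(\<integral>\<^sup>+ y. ennreal (l1norm (y - x) powr pb) \<partial>kernel \<omega> z)
    \<le> ennreal (K * s powr (1 - pb) * l1norm (z - x) powr pb + K * M powr pb)"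
proof -
  have K: "0 \<le> K" "0 \<le> K * s powr (1 - pb) * l1norm (z - x) powr pb"
    by (simp_all add: K_def)
  \<comment> \<open>convexity, with weights \<open>s\<close> and \<open>1\<close> for the displacements \<open>z - x\<close> and \<open>y - z\<close>\<close>
  have "l1norm (y - x) powr pb \<le> K * l1norm (y - z) powr pb + K * s powr (1 - pb) * l1norm (z - x) powr pb"
    for y
  proof -
    have "l1norm (y - x) \<le> l1norm (z - x) + l1norm (y - z)"
      using l1norm_triangle[of "z - x" "y - z"] by simp
    then have "l1norm (y - x) powr pb \<le> (l1norm (z - x) + l1norm (y - z)) powr pb"
      using assms l1norm_nonneg by (intro powr_mono2) auto
    also have "\<dots> \<le> K * (s powr (1 - pb) * l1norm (z - x) powr pb + 1 powr (1 - pb) * l1norm (y - z) powr pb)"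
      unfolding K_def using assms l1norm_nonneg by (intro powr_add_le_weighted) auto
    finally show ?thesis
      by (simp add: algebra_simps)
  qed
  then have "(\<integral>\<^sup>+ y. ennreal (l1norm (y - x) powr pb) \<partial>kernel \<omega> z)
      \<le> (\<integral>\<^sup>+ y. ennreal (K * l1norm (y - z) powr pb + K * s powr (1 - pb) * l1norm (z - x) powr pb) \<partial>kernel \<omega> z)"
    by (intro nn_integral_mono ennreal_leI)
  also have "\<dots> = ennreal K * (\<integral>\<^sup>+ y. ennreal (l1norm (y - z) powr pb) \<partial>kernel \<omega> z)
      + ennreal (K * s powr (1 - pb) * l1norm (z - x) powr pb)"
    using K by (intro nn_integral_pmf_affine) auto
  also have "\<dots> \<le> ennreal K * ennreal (M powr pb) + ennreal (K * s powr (1 - pb) * l1norm (z - x) powr pb)"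
    using kernel_moment_powr[of pb z] assms by (intro add_mono mult_left_mono) auto
  finally show ?thesis
    using K by (simp add: ennreal_mult ennreal_plus add.commute)
qed

lemma kernel_exp_increment:
  assumes "0 \<le> lam" "lam \<le> lambda0 u \<delta> M p"
  shows "(\<integral>\<^sup>+ y. ennreal (exp (- (lam * dotu (y - x) u))) \<partial>kernel \<omega> x) \<le> ennreal (1 - lam * \<delta> / 2)"
proof -
  define c where "c = lam powr min p 2 * norm u powr min p 2"
  have c: "0 \<le> c"
    by (simp add: c_def)
  define E where "E = (\<integral>\<^sup>+ y. ennreal (exp (- (lam * dotu (y - x) u))) \<partial>kernel \<omega> x)"
  define S where "S = (\<integral>\<^sup>+ y. ennreal (dotu (y - x) u) \<partial>kernel \<omega> x)"
  have "E + ennreal lam * S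
      = (\<integral>\<^sup>+ y. ennreal (exp (- (lam * dotu (y - x) u))) + ennreal lam * ennreal (dotu (y - x) u) \<partial>kernel \<omega> x)"
    by (simp add: E_def S_def nn_integral_add nn_integral_cmult)
  also have "\<dots> \<le> (\<integral>\<^sup>+ y. 1 + ennreal c * (1 + ennreal (l1norm (y - x) powr p)) \<partial>kernel \<omega> x)"
    using AE_kernel_forward
  proof (rule nn_integral_mono_AE[OF eventually_mono])
    fix y
    assume "0 \<le> dotu (y - x) u"
    then have "exp (- (lam * dotu (y - x) u)) + lam * dotu (y - x) u \<le> 1 + c * (1 + l1norm (y - x) powr p)"
      unfolding c_def using assms p_gt_1 dotu_le_norm_l1norm l1norm_nonneg
      by (intro exp_minus_mult_add_le) auto
    then show "ennreal (exp (- (lam * dotu (y - x) u))) + ennreal lam * ennreal (dotu (y - x) u)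
        \<le> 1 + ennreal c * (1 + ennreal (l1norm (y - x) powr p))"
      using \<open>0 \<le> dotu (y - x) u\<close> assms c
      by (simp add: ennreal_leI flip: ennreal_mult ennreal_plus ennreal_1)
  qed
  also have "\<dots> = 1 + ennreal c * (1 + (\<integral>\<^sup>+ y. ennreal (l1norm (y - x) powr p) \<partial>kernel \<omega> x))"
    by (simp add: nn_integral_add nn_integral_cmult measure_pmf.emeasure_space_1)
  also have "\<dots> \<le> 1 + ennreal c * (1 + ennreal (M powr p))"
    using kernel_moment[of x] by (intro add_mono mult_left_mono) auto
  also have "\<dots> = ennreal (1 + lam powr min p 2 * exp_step_const u M p)"
    using c by (simp add: c_def exp_step_const_def ennreal_mult ennreal_plus powr_mult mult.assoc
        flip: ennreal_1)
  also have "\<dots> \<le> ennreal (1 + lam * \<delta> / 2)"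
    using powr_exp_step_const_le[OF u_nonzero drift_pos p_gt_1 assms] by (intro ennreal_leI) simp
  finally have "E + ennreal (lam * \<delta>) \<le> ennreal (1 + lam * \<delta> / 2)"
    using kernel_drift[of x] assms drift_pos
    by (simp add: S_def ennreal_mult order.trans[OF add_left_mono[OF mult_left_mono]])
  then have "E \<le> ennreal (1 + lam * \<delta> / 2 - lam * \<delta>)"
    using assms drift_pos by (intro ennreal_le_diff_of_add_le) auto
  moreover have "1 + lam * \<delta> / 2 - lam * \<delta> = 1 - lam * \<delta> / 2"
    by simp
  ultimately show ?thesis
    by (simp only: E_def)
qed

lemma decay_nonneg: "0 \<le> lam \<Longrightarrow> lam \<le> lambda0 u \<delta> M p \<Longrightarrow> 0 \<le> 1 - lam * \<delta> / 2"
  using lambda0_mult_le[OF drift_pos, of u M p] mult_right_mono[of lam "lambda0 u \<delta> M p" \<delta>] drift_pos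
  by linarith

lemma kernel_exp_bound:
  assumes "0 \<le> lam" "lam \<le> lambda0 u \<delta> M p"
  shows "(\<integral>\<^sup>+ y. ennreal (exp (- lam * dotu y u)) \<partial>kernel \<omega> z)
    \<le> ennreal (exp (- lam * dotu z u)) * ennreal (1 - lam * \<delta> / 2)"
proof -
  have split: "exp (- lam * dotu y u) = exp (- lam * dotu z u) * exp (- (lam * dotu (y - z) u))" for y
  proof -
    have "- lam * dotu y u = - lam * dotu z u + - (lam * dotu (y - z) u)"
      by (simp add: dotu_diff algebra_simps)
    then show ?thesis
      by (simp only: exp_add)
  qed
  have "ennreal (exp (- lam * dotu y u))
      = ennreal (exp (- lam * dotu z u)) * ennreal (exp (- (lam * dotu (y - z) u)))" for y
    unfolding split[of y] by (rule ennreal_mult') simp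
  then have "(\<integral>\<^sup>+ y. ennreal (exp (- lam * dotu y u)) \<partial>kernel \<omega> z)
      = (\<integral>\<^sup>+ y. ennreal (exp (- lam * dotu z u)) * ennreal (exp (- (lam * dotu (y - z) u))) \<partial>kernel \<omega> z)"
    by (intro nn_integral_cong)
  also have "\<dots> = ennreal (exp (- lam * dotu z u)) * (\<integral>\<^sup>+ y. ennreal (exp (- (lam * dotu (y - z) u))) \<partial>kernel \<omega> z)"
    by (rule nn_integral_cmult) simp
  also have "\<dots> \<le> ennreal (exp (- lam * dotu z u)) * ennreal (1 - lam * \<delta> / 2)"
    using kernel_exp_increment[OF assms] by (rule mult_left_mono) simp
  finally show ?thesis .
qed

section \<open>Estimates along the path\<close>

lemma path_exp_bound:
  assumes "0 \<le> lam" "lam \<le> lambda0 u \<delta> M p"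
  shows "(\<integral>\<^sup>+ ys. ennreal (exp (- lam * dotu (ys ! n) u)) \<partial>path_pmf \<omega> x n)
    \<le> ennreal (exp (- lam * dotu x u) * (1 - lam * \<delta> / 2) ^ n)"
proof (induction n)
  case 0
  then show ?case by simp
next
  case (Suc n)
  let ?r = "1 - lam * \<delta> / 2"
  have "(\<integral>\<^sup>+ ys. ennreal (exp (- lam * dotu (ys ! Suc n) u)) \<partial>path_pmf \<omega> x (Suc n))
      = (\<integral>\<^sup>+ ys. (\<integral>\<^sup>+ y. ennreal (exp (- lam * dotu y u)) \<partial>kernel \<omega> (ys ! n)) \<partial>path_pmf \<omega> x n)"
    by (rule nn_integral_path_pmf_Suc)
  also have "\<dots> \<le> (\<integral>\<^sup>+ ys. ennreal (exp (- lam * dotu (ys ! n) u)) * ennreal ?r \<partial>path_pmf \<omega> x n)"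
    using kernel_exp_bound[OF assms] by (rule nn_integral_mono)
  also have "\<dots> \<le> ennreal (exp (- lam * dotu x u) * ?r ^ n) * ennreal ?r"
    using Suc.IH by (simp add: nn_integral_multc mult_right_mono)
  also have "\<dots> = ennreal (exp (- lam * dotu x u) * ?r ^ Suc n)"
    using decay_nonneg[OF assms] by (simp add: ennreal_mult[symmetric] ac_simps)
  finally show ?case .
qed

lemma prob_no_hit_by_le:
  assumes "0 \<le> lam" "lam \<le> lambda0 u \<delta> M p"
  shows "measure_pmf.prob (path_pmf \<omega> x n) (no_hit_by u n) \<le> exp lam * (1 - lam * \<delta> / 2) ^ n"
proof -
  define c where "c = exp (lam * (1 + dotu x u))"
  have "indicator (no_hit_by u n) ys \<le> ennreal c * ennreal (exp (- lam * dotu (ys ! n) u))"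
    if "ys \<in> set_pmf (path_pmf \<omega> x n)" for ys
  proof (cases "ys \<in> no_hit_by u n")
    case True
    then have "dotu (ys ! n) u < dotu x u + 1"
      using set_pmf_path_pmf[OF that] by (auto simp: no_hit_by_def hits_def)
    then have "lam * dotu (ys ! n) u \<le> lam * (1 + dotu x u)"
      using assms by (intro mult_left_mono) auto
    then have "1 \<le> c * exp (- lam * dotu (ys ! n) u)"
      by (simp add: c_def flip: exp_add)
    then show ?thesis
      using True by (simp add: c_def ennreal_leI flip: ennreal_mult)
  qed simp
  then have "emeasure (path_pmf \<omega> x n) (no_hit_by u n)
      \<le> (\<integral>\<^sup>+ ys. ennreal c * ennreal (exp (- lam * dotu (ys ! n) u)) \<partial>path_pmf \<omega> x n)"
    by (simp add: nn_integral_mono_AE AE_pmfI flip: nn_integral_indicator)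
  also have "\<dots> \<le> ennreal c * ennreal (exp (- lam * dotu x u) * (1 - lam * \<delta> / 2) ^ n)"
    using path_exp_bound[OF assms] by (simp add: nn_integral_cmult mult_left_mono)
  also have "\<dots> = ennreal (exp lam * (1 - lam * \<delta> / 2) ^ n)"
    using decay_nonneg[OF assms] by (simp add: c_def algebra_simps flip: ennreal_mult exp_add)
  finally show ?thesis
    using decay_nonneg[OF assms] by (simp add: measure_pmf.emeasure_eq_measure)
qed

lemma path_moment_powr:
  assumes "1 \<le> pb" "pb \<le> p"
  shows "(\<integral>\<^sup>+ ys. ennreal (l1norm (ys ! m - x) powr pb) \<partial>path_pmf \<omega> x m) \<le> ennreal (M powr pb * real m powr pb)"
proof (induction m)
  case 0
  then show ?case by simp
next
  case (Suc m)
  have "(\<integral>\<^sup>+ ys. ennreal (l1norm (ys ! Suc m - x) powr pb) \<partial>path_pmf \<omega> x (Suc m))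
      = (\<integral>\<^sup>+ ys. (\<integral>\<^sup>+ y. ennreal (l1norm (y - x) powr pb) \<partial>kernel \<omega> (ys ! m)) \<partial>path_pmf \<omega> x m)"
    by (rule nn_integral_path_pmf_Suc)
  also have "\<dots> \<le> ennreal (M powr pb * real (Suc m) powr pb)"
  proof (cases "m = 0")
    case True
    then show ?thesis
      using kernel_moment_powr[of pb x] assms by simp
  next
    case False
    define K where "K = (real m + 1) powr (pb - 1)"
    define a where "a = K * real m powr (1 - pb)"
    have Ka: "0 \<le> K" "0 \<le> a"
      by (simp_all add: K_def a_def)
    have "(\<integral>\<^sup>+ ys. (\<integral>\<^sup>+ y. ennreal (l1norm (y - x) powr pb) \<partial>kernel \<omega> (ys ! m)) \<partial>path_pmf \<omega> x m)
        \<le> (\<integral>\<^sup>+ ys. ennreal (a * l1norm (ys ! m - x) powr pb + K * M powr pb) \<partial>path_pmf \<omega> x m)"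
      using kernel_moment_powr_split[OF assms, of "real m"] False
      by (intro nn_integral_mono) (simp add: K_def a_def)
    also have "\<dots> = ennreal a * (\<integral>\<^sup>+ ys. ennreal (l1norm (ys ! m - x) powr pb) \<partial>path_pmf \<omega> x m)
        + ennreal (K * M powr pb)"
      using Ka by (intro nn_integral_pmf_affine) auto
    also have "\<dots> \<le> ennreal a * ennreal (M powr pb * real m powr pb) + ennreal (K * M powr pb)"
      using Suc.IH by (intro add_mono mult_left_mono) auto
    also have "\<dots> = ennreal (M powr pb * (K * (real m powr (1 - pb) * real m powr pb + 1)))"
      using Ka by (simp add: a_def algebra_simps flip: ennreal_mult ennreal_plus)
    also have "K * (real m powr (1 - pb) * real m powr pb + 1) = real (Suc m) powr pb"
      using False powr_mult_base[of "1 + real m" "pb - 1"]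
      by (simp add: K_def powr_add[symmetric] powr_mult_base mult.commute add.commute)
    finally show ?thesis .
  qed
  finally show ?case .
qed

section \<open>Moments of the hitting time\<close>

abbreviation "lam0 \<equiv> lambda0 u \<delta> M p"

abbreviation "rho0 \<equiv> 1 - lam0 * \<delta> / 2"

lemma rho0_pos: "0 < rho0" and rho0_less_1: "rho0 < 1"
  using lambda0_pos[OF u_nonzero drift_pos, of M p] lambda0_mult_le[OF drift_pos, of u M p] drift_pos
  by auto

lemma emeasure_no_hit_by_le:
  assumes "k \<le> N"
  shows "emeasure (path_pmf \<omega> x N) (no_hit_by u k) \<le> ennreal (exp lam0 * rho0 ^ k)"
proof -
  have "emeasure (path_pmf \<omega> x N) (no_hit_by u k) = ennreal (measure_pmf.prob (path_pmf \<omega> x k) (no_hit_by u k))"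
    unfolding emeasure_path_pmf_no_hit_by[OF assms] by (rule measure_pmf.emeasure_eq_measure)
  also have "\<dots> \<le> ennreal (exp lam0 * rho0 ^ k)"
    using lambda0_pos[OF u_nonzero drift_pos, of M p] by (intro ennreal_leI prob_no_hit_by_le) auto
  finally show ?thesis .
qed

lemma weighted_emeasure_no_hit_by_le:
  assumes "k \<le> N"
  shows "ennreal (inverse (sqrt rho0) ^ k) * emeasure (path_pmf \<omega> x N) (no_hit_by u k)
    \<le> ennreal (exp lam0 * sqrt rho0 ^ k)"
proof -
  have "inverse (sqrt rho0) * rho0 = sqrt rho0"
    using rho0_pos by (metis divide_inverse mult.commute order_less_imp_le real_div_sqrt)
  then have "inverse (sqrt rho0) ^ k * (exp lam0 * rho0 ^ k) = exp lam0 * sqrt rho0 ^ k"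
    by (metis power_mult_distrib mult.left_commute)
  moreover have "(0::real) \<le> inverse (sqrt rho0) ^ k"
    using rho0_pos by simp
  ultimately have "ennreal (inverse (sqrt rho0) ^ k) * ennreal (exp lam0 * rho0 ^ k) = ennreal (exp lam0 * sqrt rho0 ^ k)"
    by (metis ennreal_mult')
  with emeasure_no_hit_by_le[OF assms] show ?thesis
    by (metis mult_left_mono zero_le)
qed

lemma nn_integral_displacement_le:
  assumes "k < N"
  shows "(\<integral>\<^sup>+ ys. ennreal (l1norm (ys ! Suc k - x) powr p) \<partial>path_pmf \<omega> x N)
    \<le> ennreal (M powr p * real (Suc k) ^ nat \<lceil>p\<rceil>)"
proof -
  have "(\<integral>\<^sup>+ ys. ennreal (l1norm (ys ! Suc k - x) powr p) \<partial>path_pmf \<omega> x N)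
      = (\<integral>\<^sup>+ ys. ennreal (l1norm (ys ! Suc k - x) powr p) \<partial>path_pmf \<omega> x (Suc k))"
    using nn_integral_path_pmf_take[of "Suc k" N, where f = "\<lambda>zs. ennreal (l1norm (zs ! Suc k - x) powr p)"]
      assms by simp
  also have "\<dots> \<le> ennreal (M powr p * real (Suc k) powr p)"
    using p_gt_1 by (intro path_moment_powr) auto
  also have "\<dots> \<le> ennreal (M powr p * real (Suc k) ^ nat \<lceil>p\<rceil>)"
  proof -
    have "p \<le> real (nat \<lceil>p\<rceil>)"
      using p_gt_1 le_of_int_ceiling[of p] by (simp add: of_nat_nat)
    then have "real (Suc k) powr p \<le> real (Suc k) powr real (nat \<lceil>p\<rceil>)"
      by (intro powr_mono) auto
    then show ?thesis
      by (intro ennreal_leI mult_left_mono) (simp_all add: powr_realpow)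
  qed
  finally show ?thesis .
qed

lemma E_sigma_pow_le: "E_sigma_pow \<omega> u x m \<le> ennreal (sigma_moment_const lam0 rho0 m)"
  unfolding E_sigma_pow_def
proof (rule SUP_least)
  fix N
  have "(\<integral>\<^sup>+ ys. ennreal (real (sigma_trunc u ys) ^ m) \<partial>path_pmf \<omega> x N)
      \<le> (\<integral>\<^sup>+ ys. 1 + (\<Sum>k<N. ennreal (real (Suc k) ^ m) * indicator (no_hit_by u k) ys) \<partial>path_pmf \<omega> x N)"
    by (intro nn_integral_mono_AE AE_pmfI sigma_trunc_pow_le_sum) (simp add: set_pmf_path_pmf)
  also have "\<dots> = 1 + (\<Sum>k<N. ennreal (real (Suc k) ^ m) * emeasure (path_pmf \<omega> x N) (no_hit_by u k))"
  proof -
    have "(\<integral>\<^sup>+ ys. (\<Sum>k<N. ennreal (real (Suc k) ^ m) * indicator (no_hit_by u k) ys) \<partial>path_pmf \<omega> x N)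
        = (\<Sum>k<N. \<integral>\<^sup>+ ys. ennreal (real (Suc k) ^ m) * indicator (no_hit_by u k) ys \<partial>path_pmf \<omega> x N)"
      by (rule nn_integral_sum) auto
    then show ?thesis
      by (subst nn_integral_add) (simp_all add: measure_pmf.emeasure_space_1 nn_integral_cmult_indicator)
  qed
  also have "\<dots> \<le> 1 + (\<Sum>k<N. ennreal (real (Suc k) ^ m) * ennreal (exp lam0 * rho0 ^ k))"
    by (intro add_mono sum_mono mult_left_mono emeasure_no_hit_by_le) auto
  also have "\<dots> = 1 + ennreal (exp lam0 * (\<Sum>k<N. real (Suc k) ^ m * rho0 ^ k))"
    using rho0_pos by (simp add: sum_distrib_left ac_simps flip: ennreal_mult)
  also have "\<dots> \<le> ennreal (sigma_moment_const lam0 rho0 m)"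
    using sum_le_poly_geometric_sum[OF rho0_pos rho0_less_1] poly_geometric_sum_nonneg[OF rho0_pos rho0_less_1]
    by (simp add: sigma_moment_const_def add_left_mono ennreal_leI)
  finally show "(\<integral>\<^sup>+ ys. ennreal (real (sigma_trunc u ys) ^ m) \<partial>path_pmf \<omega> x N)
      \<le> ennreal (sigma_moment_const lam0 rho0 m)" .
qed

lemma E_hit_disp_le:
  assumes "1 \<le> pb" "pb < p"
  shows "E_hit_disp \<omega> u x pb \<le> ennreal (hit_disp_const lam0 rho0 M p pb)"
  unfolding E_hit_disp_def
proof (rule SUP_least)
  fix N
  define r where "r = sqrt rho0"
  define s where "s = r powr (p / pb - 1)"
  have r: "0 < r" "r < 1"
    using rho0_pos rho0_less_1 by (simp_all add: r_def)
  have s: "0 < s" "s < 1"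
    using r assms by (auto simp: s_def field_simps intro: powr_less_one_of_less_one)
  have "inverse r powr (1 - p / pb) = s"
    using r by (simp add: s_def inverse_powr flip: powr_minus)
  then have "(if \<exists>k. hits u ys k then ennreal (l1norm (ys ! sigma_trunc u ys - x) powr pb) else 0)
      \<le> (\<Sum>k<N. ennreal (inverse r ^ k) * indicator (no_hit_by u k) ys
                + ennreal (s ^ k * l1norm (ys ! Suc k - x) powr p))"
    if "ys \<in> set_pmf (path_pmf \<omega> x N)" for ys
    using hit_disp_le_sum[of ys N "inverse r" pb p u x] set_pmf_path_pmf[OF that] r assms by simp
  then have "(\<integral>\<^sup>+ ys. (if \<exists>k. hits u ys k then ennreal (l1norm (ys ! sigma_trunc u ys - x) powr pb) else 0)
        \<partial>path_pmf \<omega> x N)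
      \<le> (\<integral>\<^sup>+ ys. (\<Sum>k<N. ennreal (inverse r ^ k) * indicator (no_hit_by u k) ys
                + ennreal (s ^ k * l1norm (ys ! Suc k - x) powr p)) \<partial>path_pmf \<omega> x N)"
    by (intro nn_integral_mono_AE AE_pmfI)
  also have "\<dots> = (\<Sum>k<N. ennreal (inverse r ^ k) * emeasure (path_pmf \<omega> x N) (no_hit_by u k)
      + ennreal (s ^ k) * (\<integral>\<^sup>+ ys. ennreal (l1norm (ys ! Suc k - x) powr p) \<partial>path_pmf \<omega> x N))"
    using s by (simp add: nn_integral_sum nn_integral_add nn_integral_cmult nn_integral_cmult_indicator
        ennreal_mult)
  also have "\<dots> \<le> (\<Sum>k<N. ennreal (exp lam0 * r ^ k) + ennreal (s ^ k) * ennreal (M powr p * real (Suc k) ^ nat \<lceil>p\<rceil>))"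
    unfolding r_def
    by (intro sum_mono add_mono mult_left_mono weighted_emeasure_no_hit_by_le nn_integral_displacement_le) auto
  also have "\<dots> \<le> ennreal (exp lam0 / (1 - r) + M powr p * poly_geometric_sum (nat \<lceil>p\<rceil>) s)"
    using r s by (intro sum_geometric_terms_le) auto
  finally show "(\<integral>\<^sup>+ ys. (if \<exists>k. hits u ys k then ennreal (l1norm (ys ! sigma_trunc u ys - x) powr pb) else 0)
        \<partial>path_pmf \<omega> x N)
      \<le> ennreal (hit_disp_const lam0 rho0 M p pb)"
    by (simp add: hit_disp_const_def r_def s_def)
qed

end

section \<open>Shift invariance\<close>

lemma shift_measurable:
  fixes z :: "int^('d::finite)"
  shows "shift z \<in> measurable env_space env_space"
  unfolding env_space_def shift_def
proof (rule measurable_PiM_single')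
  fix x :: "int^'d"
  show "(\<lambda>(\<omega>::'d env) y. \<omega> (x + z) (y + z))
      \<in> measurable (Pi\<^sub>M UNIV (\<lambda>_. Pi\<^sub>M UNIV (\<lambda>_. borel))) (Pi\<^sub>M UNIV (\<lambda>_. borel :: real measure))"
  proof (rule measurable_PiM_single')
    fix y :: "int^'d"
    have m1: "(\<lambda>\<omega>::'d env. \<omega> (x + z))
        \<in> measurable (Pi\<^sub>M UNIV (\<lambda>_. Pi\<^sub>M UNIV (\<lambda>_. borel))) (Pi\<^sub>M UNIV (\<lambda>_. borel :: real measure))"
      by (rule measurable_component_singleton) simp
    have m2: "(\<lambda>f. f (y + z)) \<in> measurable (Pi\<^sub>M UNIV (\<lambda>_. borel :: real measure)) borel"
      by (rule measurable_component_singleton) simp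
    show "(\<lambda>\<omega>::'d env. \<omega> (x + z) (y + z)) \<in> measurable (Pi\<^sub>M UNIV (\<lambda>_. Pi\<^sub>M UNIV (\<lambda>_. borel))) borel"
      using measurable_comp[OF m1 m2] by (simp add: o_def)
  qed (auto simp: space_PiM)
qed (auto simp: space_PiM)

lemma AE_shift:
  fixes P :: "('d::finite) env measure"
  assumes "sets P = sets env_space" "\<forall>z. distr P P (shift z) = P" "AE \<omega> in P. Q \<omega>"
  shows "AE \<omega> in P. \<forall>x. Q (shift x \<omega>)"
proof -
  have "AE \<omega> in P. Q (shift x \<omega>)" for x
  proof (rule AE_distrD[where f = "shift x" and M' = P])
    show "shift x \<in> measurable P P"
      using shift_measurable measurable_cong_sets[OF assms(1) assms(1)] by blast
    show "AE \<omega> in distr P P (shift x). Q \<omega>"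
      by (simp only: assms(2)[rule_format] assms(3))
  qed
  then show ?thesis
    by (simp add: AE_all_countable)
qed

lemma AE_non_nestling_env:
  fixes P :: "('d::finite) env measure"
  assumes "0 < \<delta>" "0 < M" "1 < p"
    and "sets P = sets env_space" "\<forall>z. distr P P (shift z) = P" "AE \<omega> in P. \<omega> \<in> Omega"
    and "AE \<omega> in P. (\<Sum>\<^sub>\<infinity>z\<in>{z. 0 \<le> dotu z u}. \<omega> 0 z) = 1"
    and "AE \<omega> in P. (\<Sum>\<^sub>\<infinity>z. dotu z u * \<omega> 0 z) \<ge> \<delta>"
    and "AE \<omega> in P. (\<integral>\<^sup>+ z. ennreal (l1norm z powr p * \<omega> 0 z) \<partial>count_space UNIV) \<le> ennreal (M powr p)"
  shows "AE \<omega> in P. non_nestling_env \<omega> u \<delta> M p"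
  using assms(6) AE_shift[OF assms(4,5) assms(7)] AE_shift[OF assms(4,5) assms(8)] AE_shift[OF assms(4,5) assms(9)]
  by eventually_elim (use assms(1-3) in \<open>auto simp: non_nestling_env_def shift_def add.commute\<close>)

theorem lemma3p4:
  fixes u :: "real^('d::finite)" and M \<delta> p :: real
  assumes "u \<noteq> 0" and "\<delta> > 0" and "M > 0" and "p > 1"
  shows "\<exists>lam0 (Cbar :: nat \<Rightarrow> real) (Chat :: real \<Rightarrow> real).
    lam0 > 0 \<and> (\<forall>m. Cbar m > 0) \<and> (\<forall>pb. 1 \<le> pb \<and> pb < p \<longrightarrow> Chat pb > 0) \<and>
    (\<forall>P :: 'd env measure.
      prob_space P \<and> sets P = sets env_space \<and>
      (AE \<omega> in P. \<omega> \<in> Omega) \<and>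
      (\<forall>z. distr P P (shift z) = P) \<and>
      (AE \<omega> in P. (\<Sum>\<^sub>\<infinity>z\<in>{z. 0 \<le> dotu z u}. \<omega> 0 z) = 1) \<and>
      (AE \<omega> in P. (\<Sum>\<^sub>\<infinity>z. dotu z u * \<omega> 0 z) \<ge> \<delta>) \<and>
      (AE \<omega> in P. (\<integral>\<^sup>+ z. ennreal (l1norm z powr p * \<omega> 0 z) \<partial>count_space UNIV)
                      \<le> ennreal (M powr p))
      \<longrightarrow>
      (AE \<omega> in P. \<forall>x lam n m. 0 \<le> lam \<and> lam \<le> lam0 \<longrightarrow>
         (\<forall>pb. 1 \<le> pb \<and> pb \<le> p \<longrightarrow>
            (\<integral>\<^sup>+ ys. ennreal (l1norm (ys ! m - x) powr pb) \<partial>measure_pmf (path_pmf \<omega> x m))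
              \<le> ennreal (M powr pb * real m powr pb)) \<and>
         (\<integral>\<^sup>+ ys. ennreal (exp (- lam * dotu (ys ! n) u)) \<partial>measure_pmf (path_pmf \<omega> x n))
              \<le> ennreal (exp (- lam * dotu x u) * (1 - lam * \<delta> / 2) ^ n) \<and>
         measure_pmf.prob (path_pmf \<omega> x n) {ys. \<forall>k\<le>n. \<not> hits u ys k}
              \<le> exp lam * (1 - lam * \<delta> / 2) ^ n \<and>
         E_sigma_pow \<omega> u x m \<le> ennreal (Cbar m) \<and>
         (\<forall>pb. 1 \<le> pb \<and> pb < p \<longrightarrow> E_hit_disp \<omega> u x pb \<le> ennreal (Chat pb))))"
proof -
  define lam0 where "lam0 = lambda0 u \<delta> M p"
  define rho where "rho = 1 - lam0 * \<delta> / 2"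
  have lam0: "0 < lam0" and rho: "0 < rho" "rho < 1"
    using lambda0_pos[OF assms(1,2), of M p] lambda0_mult_le[OF assms(2), of u M p] assms(2)
    by (auto simp: lam0_def rho_def)
  show ?thesis
  proof (intro exI[of _ lam0] exI[of _ "sigma_moment_const lam0 rho"] exI[of _ "hit_disp_const lam0 rho M p"]
      conjI allI impI)
    show "0 < lam0" "0 < sigma_moment_const lam0 rho m" for m
      using lam0 sigma_moment_const_pos[OF rho] by auto
    show "0 < hit_disp_const lam0 rho M p pb" if "1 \<le> pb \<and> pb < p" for pb
      using that hit_disp_const_pos[OF rho] by simp
    \<comment> \<open>almost every environment is non-nestling at every site, and (i)--(v) hold there\<close>
  qed (elim conjE, rule eventually_mono[OF AE_non_nestling_env[OF assms(2-4)]], assumption+,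
      auto simp: lam0_def rho_def
        intro: non_nestling_env.path_moment_powr non_nestling_env.path_exp_bound[simplified]
          non_nestling_env.prob_no_hit_by_le[unfolded no_hit_by_def] non_nestling_env.E_sigma_pow_le
          non_nestling_env.E_hit_disp_le)
qed

end
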